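(* Let $0<q<1$, $v>-1$, and let $\omega:\mathbb R\to\mathbb R$ be an even function with $\omega(q^n)\neq 0$ for all $n\in\mathbb Z$. Let $d\mu(x)=\omega(x)^2|x|^{2v+1}d_qx$, where $d_qx=(1-q)\sum_{n\in\mathbb Z}q^n\delta_{q^n}$, and assume $\mu$ has finite moments $s_n=\int x^n\,d\mu(x)$ of all orders. If $$\lim_{n\rightarrow\infty}q^{n/4}\,(s_{2n})^{1/(2n)}=0,$$ then $\mu$ is determinate.
   Context: $\delta_a$ denotes the Dirac mass at $a$. A positive measure $\mu$ on $\mathbb R$ with moments of all orders and infinite support is called determinate if it is the only positive measure on $\mathbb R$ having the same moments $s_n=\int x^n d\mu(x)$ for all $n\ge 0$. *)

theory Defs
  imports "HOL-Probability.Probability"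
begin

definition moment :: "real measure \<Rightarrow> nat \<Rightarrow> real" where
  "moment M n = (\<integral>x. x ^ n \<partial>M)"

definition has_all_moments :: "real measure \<Rightarrow> bool" where
  "has_all_moments M \<longleftrightarrow> sets M = sets borel \<and> (\<forall>n. integrable M (\<lambda>x. x ^ n))"

definition determinate :: "real measure \<Rightarrow> bool" where
  "determinate M \<longleftrightarrow> has_all_moments M \<and>
     (\<forall>N. has_all_moments N \<and> (\<forall>n. moment N n = moment M n) \<longrightarrow> N = M)"

text \<open>The measure  omega(x)^2 |x|^(2v+1) d_q x,  with
  d_q x = (1-q) sum_{n in Z} q^n delta_{q^n}.\<close>
definition q_measure :: "real \<Rightarrow> real \<Rightarrow> (real \<Rightarrow> real) \<Rightarrow> real measure" where
  "q_measure q v \<omega> =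
     distr (density (count_space (UNIV::int set))
              (\<lambda>n. ennreal ((1 - q) * q powi n * (\<omega> (q powi n))\<^sup>2 * \<bar>q powi n\<bar> powr (2 * v + 1))))
           borel (\<lambda>n. q powi n)"

end

theory Submission
  imports Defs "HOL-Computational_Algebra.Polynomial"
begin

text \<open>
  The measure lives on the lattice of points \<open>q^l\<close>, \<open>l \<in> \<int>\<close>. For \<open>E \<subseteq> {-m..4m}\<close> the polynomial
  \<open>qprod q E x = \<Prod>e\<in>E. 1 - x q^e\<close> vanishes at the points \<open>q^-e\<close>, lies in \<open>[0, 1]\<close> at the
  small points \<open>q^l\<close>, \<open>l > m\<close>, and is at most \<open>q^((15m\<^sup>2 + 3m)/2 - (5m + 1)T)\<close> at a large
  point \<open>q^-T\<close>, \<open>T > 4m\<close>, where the growth condition on the moments leaves mass at most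
  \<open>q^(2T\<^sup>2)\<close>. Hence the integral of \<open>(qprod q E)\<^sup>2\<close> is its sum over the remaining points of
  the window \<open>-4m \<le> l \<le> m\<close> plus a remainder tending to \<open>0\<close>; being the integral of a
  polynomial, it is the same for every measure \<open>N\<close> with the same moments.
  Off the lattice, \<open>|qprod q E x|\<close> is bounded below uniformly in \<open>E\<close>, so taking
  \<open>E = {-m..4m}\<close> shows that \<open>N\<close> also lives on the lattice. Removing \<open>-j\<close> from \<open>E\<close>
  isolates the point \<open>q^j\<close>, where \<open>|qprod q E|\<close> is again bounded below, and gives
  \<open>N{q^j} \<le> M{q^j}\<close>; by symmetry the point masses agree and \<open>N = M\<close>.
\<close>

definition q_lattice :: "real \<Rightarrow> real set" where
  "q_lattice q = range (\<lambda>l::int. q powi l)"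

definition qprod :: "real \<Rightarrow> int set \<Rightarrow> real \<Rightarrow> real" where
  "qprod q E x = (\<Prod>e\<in>E. 1 - x * q powi e)"

text \<open>The zeros of \<open>qprod q {-m..4m}\<close>.\<close>
definition q_window :: "real \<Rightarrow> nat \<Rightarrow> real set" where
  "q_window q m = (\<lambda>l. q powi l) ` {- 4 * int m..int m}"

lemma exp_neg_div_le_one_minus:
  fixes a b :: real
  assumes "0 \<le> a" "a \<le> b" "b < 1"
  shows "exp (- a / (1 - b)) \<le> 1 - a"
proof -
  have "exp (- a / (1 - b)) \<le> exp (- (a / (1 - a)))"
    using assms by (simp add: divide_left_mono)
  also have "\<dots> = inverse (exp (a / (1 - a)))" by (simp add: exp_minus)
  also have "\<dots> \<le> inverse (1 + a / (1 - a))"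
    using assms by (intro le_imp_inverse_le exp_ge_add_one_self) (auto intro: add_pos_nonneg)
  also have "1 + a / (1 - a) = 1 / (1 - a)" using assms by (simp add: field_simps)
  finally show ?thesis by simp
qed

lemma exp_le_prod_one_minus_geometric:
  fixes q b :: real and g :: "'a \<Rightarrow> nat"
  assumes q: "0 < q" "q < 1" and b: "0 \<le> b" "b < 1" and E: "finite E" "inj_on g E"
  shows "exp (- b / ((1 - q) * (1 - b))) \<le> (\<Prod>e\<in>E. 1 - b * q ^ g e)"
proof -
  have geom: "(\<Sum>n\<in>g ` E. q ^ n) \<le> 1 / (1 - q)"
    using sum_le_suminf[of "\<lambda>n. q ^ n" "g ` E"] q E
    by (auto simp: summable_geometric suminf_geometric)
  have "(b / (1 - b)) * (\<Sum>n\<in>g ` E. q ^ n) \<le> (b / (1 - b)) * (1 / (1 - q))"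
    using geom b by (intro mult_left_mono) auto
  hence "- b / ((1 - q) * (1 - b)) \<le> (\<Sum>n\<in>g ` E. - (b * q ^ n) / (1 - b))"
    using b q by (simp add: sum_negf sum_distrib_left sum_divide_distrib[symmetric] field_simps)
  hence "exp (- b / ((1 - q) * (1 - b))) \<le> (\<Prod>n\<in>g ` E. exp (- (b * q ^ n) / (1 - b)))"
    using E by (simp add: exp_sum[symmetric])
  also have "\<dots> \<le> (\<Prod>n\<in>g ` E. 1 - b * q ^ n)"
  proof (rule prod_mono)
    fix n
    have "b * q ^ n \<le> b" using q b by (simp add: mult_left_le power_le_one)
    thus "0 \<le> exp (- (b * q ^ n) / (1 - b)) \<and> exp (- (b * q ^ n) / (1 - b)) \<le> 1 - b * q ^ n"
      using exp_neg_div_le_one_minus[of "b * q ^ n" b] q b by simp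
  qed
  also have "\<dots> = (\<Prod>e\<in>E. 1 - b * q ^ g e)" using E by (simp add: prod.reindex)
  finally show ?thesis .
qed

lemma one_minus_inverse_le_abs_one_minus:
  fixes u :: real
  assumes "0 < u"
  shows "1 - 1 / u \<le> \<bar>1 - u\<bar>"
proof -
  have "(u - 1) - (1 - 1 / u) = (u - 1)\<^sup>2 / u"
    using assms by (simp add: field_simps power2_eq_square)
  hence "1 - 1 / u \<le> u - 1" using assms by (smt (verit) divide_nonneg_pos zero_le_power2)
  moreover have "1 - 1 / u \<le> 1 - u" if "u \<le> 1"
    using that assms by (simp add: field_simps) (smt (verit) mult_le_one)
  ultimately show ?thesis by linarith
qed

lemma exp_le_prod_abs_one_minus_pos_exponents:
  fixes q y :: real
  assumes q: "0 < q" "q < 1" and y: "0 < y" "y \<le> 1" and N: "finite N"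
  shows "exp (- (q * y) / ((1 - q) * (1 - q * y))) \<le> (\<Prod>n\<in>N \<inter> {n. 0 < n}. \<bar>1 - y * q powi n\<bar>)"
proof -
  have qy: "0 \<le> q * y" "q * y < 1" using q y by (auto simp: mult_less_le_imp_less[of q 1 y 1, simplified])
  have "exp (- (q * y) / ((1 - q) * (1 - q * y))) \<le> (\<Prod>n\<in>N \<inter> {n. 0 < n}. 1 - (q * y) * q ^ (nat n - 1))"
    using q qy N by (intro exp_le_prod_one_minus_geometric) (auto simp: inj_on_def)
  also have "\<dots> \<le> (\<Prod>n\<in>N \<inter> {n. 0 < n}. \<bar>1 - y * q powi n\<bar>)"
  proof (rule prod_mono)
    fix n assume "n \<in> N \<inter> {n. 0 < n}"
    hence eq: "y * q powi n = (q * y) * q ^ (nat n - 1)" by (simp add: power_int_def flip: power_Suc)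
    have "(q * y) * q ^ (nat n - 1) \<le> 1" using q qy y by (intro mult_le_one) (auto simp: power_le_one)
    thus "0 \<le> 1 - (q * y) * q ^ (nat n - 1) \<and> 1 - (q * y) * q ^ (nat n - 1) \<le> \<bar>1 - y * q powi n\<bar>"
      by (simp add: eq)
  qed
  finally show ?thesis .
qed

lemma exp_le_prod_abs_one_minus_neg_exponents:
  fixes q y :: real
  assumes q: "0 < q" "q < 1" and y: "q < y" and N: "finite N"
  shows "exp (- (q / y) / ((1 - q) * (1 - q / y))) \<le> (\<Prod>n\<in>N \<inter> {n. n < 0}. \<bar>1 - y * q powi n\<bar>)"
proof -
  have qy: "0 \<le> q / y" "q / y < 1" using q y by auto
  have "exp (- (q / y) / ((1 - q) * (1 - q / y))) \<le> (\<Prod>n\<in>N \<inter> {n. n < 0}. 1 - (q / y) * q ^ (nat (- n) - 1))"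
    using q qy N by (intro exp_le_prod_one_minus_geometric) (auto simp: inj_on_def)
  also have "\<dots> \<le> (\<Prod>n\<in>N \<inter> {n. n < 0}. \<bar>1 - y * q powi n\<bar>)"
  proof (rule prod_mono)
    fix n assume "n \<in> N \<inter> {n. n < 0}"
    hence "q powi n = 1 / (q * q ^ (nat (- n) - 1))"
      by (simp add: power_int_def power_inverse divide_inverse flip: power_Suc)
    moreover define u where "u = y * q powi n"
    ultimately have "1 / u = (q / y) * q ^ (nat (- n) - 1)" by simp
    moreover have u: "0 < u" using q y by (simp add: u_def)
    moreover have "(q / y) * q ^ (nat (- n) - 1) \<le> 1"
      using q qy by (intro mult_le_one) (auto simp: power_le_one)
    ultimately show "0 \<le> 1 - (q / y) * q ^ (nat (- n) - 1) \<and>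
        1 - (q / y) * q ^ (nat (- n) - 1) \<le> \<bar>1 - y * q powi n\<bar>"
      using one_minus_inverse_le_abs_one_minus[OF u] by (simp add: u_def)
  qed
  finally show ?thesis .
qed

lemma prod_abs_one_minus_power_int_bounded_below:
  fixes q y :: real
  assumes q: "0 < q" "q < 1" and y: "q < y" "y \<le> 1"
  obtains c where "0 < c"
    "\<And>N. finite N \<Longrightarrow> (\<And>n. n \<in> N \<Longrightarrow> y * q powi n \<noteq> 1) \<Longrightarrow>
      c \<le> (\<Prod>n\<in>N. \<bar>1 - y * q powi n\<bar>)"
proof
  define c_pos where "c_pos = exp (- (q * y) / ((1 - q) * (1 - q * y)))"
  define c_neg where "c_neg = exp (- (q / y) / ((1 - q) * (1 - q / y)))"
  \<comment> \<open>bounds the factor with exponent \<open>0\<close>, which the hypothesis excludes when \<open>y = 1\<close>\<close>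
  define c_zero where "c_zero = (if y = 1 then 1 else 1 - y)"
  show "0 < c_pos * c_neg * c_zero" using y by (simp add: c_pos_def c_neg_def c_zero_def)
  fix N :: "int set"
  assume N: "finite N" and ne1: "\<And>n. n \<in> N \<Longrightarrow> y * q powi n \<noteq> 1"
  define F where "F n = \<bar>1 - y * q powi n\<bar>" for n
  have pos: "c_pos \<le> (\<Prod>n\<in>N \<inter> {n. 0 < n}. F n)"
    unfolding c_pos_def F_def using q y N by (intro exp_le_prod_abs_one_minus_pos_exponents) auto
  have neg: "c_neg \<le> (\<Prod>n\<in>N \<inter> {n. n < 0}. F n)"
    unfolding c_neg_def F_def using q y N by (intro exp_le_prod_abs_one_minus_neg_exponents) auto
  have zero: "c_zero \<le> (\<Prod>n\<in>N \<inter> {0}. F n)"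
    using ne1[of 0] q y by (cases "0 \<in> N") (auto simp: c_zero_def F_def)
  have "(\<Prod>n\<in>N. F n) = (\<Prod>n\<in>N \<inter> {n. 0 < n}. F n) * (\<Prod>n\<in>N - {n. 0 < n}. F n)"
    using N by (rule prod.Int_Diff)
  also have "(\<Prod>n\<in>N - {n. 0 < n}. F n) = (\<Prod>n\<in>N \<inter> {n. n < 0}. F n) * (\<Prod>n\<in>N \<inter> {0}. F n)"
  proof -
    have "(N - {n. 0 < n}) \<inter> {n. n < 0} = N \<inter> {n. n < 0}" "(N - {n. 0 < n}) - {n. n < 0} = N \<inter> {0}"
      by auto
    thus ?thesis using prod.Int_Diff[of "N - {n. 0 < n}" F "{n. n < 0}"] N by simp
  qed
  finally have split: "(\<Prod>n\<in>N. F n) =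
      (\<Prod>n\<in>N \<inter> {n. 0 < n}. F n) * (\<Prod>n\<in>N \<inter> {n. n < 0}. F n) * (\<Prod>n\<in>N \<inter> {0}. F n)"
    by (simp add: mult.assoc)
  have "c_pos * c_neg * c_zero \<le> (\<Prod>n\<in>N. F n)"
    unfolding split using pos neg zero y
    by (intro mult_mono) (auto simp: c_pos_def c_neg_def c_zero_def F_def intro!: mult_nonneg_nonneg prod_nonneg)
  thus "c_pos * c_neg * c_zero \<le> (\<Prod>n\<in>N. \<bar>1 - y * q powi n\<bar>)" by (simp add: F_def)
qed

lemma qprod_bounded_below:
  fixes q x :: real
  assumes q: "0 < q" "q < 1"
  obtains c where "0 < c"
    "\<And>E. finite E \<Longrightarrow> (\<And>e. e \<in> E \<Longrightarrow> x * q powi e \<noteq> 1) \<Longrightarrow> c \<le> \<bar>qprod q E x\<bar>"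
proof (cases "x \<le> 0")
  case True
  have "1 \<le> \<bar>qprod q E x\<bar>" for E
    using True q by (auto simp: qprod_def mult_nonpos_nonneg intro!: prod_ge_1 order.trans[OF _ abs_ge_self])
  thus ?thesis by (intro that[of 1]) auto
next
  case False
  define k where "k = \<lfloor>log q x\<rfloor>"
  have x: "x = q powr log q x" using q False by simp
  have "q powr real_of_int (k + 1) < q powr log q x" "q powr log q x \<le> q powr real_of_int k"
    using q by (auto intro: powr_less_mono' powr_mono' simp: k_def)
  hence "q powr real_of_int (k + 1) < x" "x \<le> q powr real_of_int k" by (simp_all only: x[symmetric])
  moreover have "q powr real_of_int i = q powi i" for i using q by (intro powr_real_of_int') auto
  ultimately have k: "q powi (k + 1) < x" "x \<le> q powi k" by metis+
  define y where "y = x / q powi k"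
  have "q < y" "y \<le> 1" using k q by (simp_all add: y_def power_int_add field_simps)
  then obtain c where c: "0 < c"
    "\<And>N. finite N \<Longrightarrow> (\<And>n. n \<in> N \<Longrightarrow> y * q powi n \<noteq> 1) \<Longrightarrow>
      c \<le> (\<Prod>n\<in>N. \<bar>1 - y * q powi n\<bar>)"
    using prod_abs_one_minus_power_int_bounded_below q by blast
  have shift: "x * q powi e = y * q powi (e + k)" for e using q by (simp add: y_def power_int_add)
  show ?thesis
  proof (rule that[OF c(1)])
    fix E assume E: "finite E" "\<And>e. e \<in> E \<Longrightarrow> x * q powi e \<noteq> 1"
    have "c \<le> (\<Prod>n\<in>(\<lambda>e. e + k) ` E. \<bar>1 - y * q powi n\<bar>)"
      using E by (intro c(2)) (auto simp: shift)
    also have "\<dots> = \<bar>qprod q E x\<bar>"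
      by (simp add: prod.reindex qprod_def abs_prod shift)
    finally show "c \<le> \<bar>qprod q E x\<bar>" .
  qed
qed

lemma power_int_eq_iff_less_one:
  fixes q :: real
  assumes "0 < q" "q < 1"
  shows "q powi a = q powi b \<longleftrightarrow> a = b"
  using power_int_strict_decreasing[of a b q] power_int_strict_decreasing[of b a q] assms
  by (cases a b rule: linorder_cases) auto

lemma qprod_eq_0:
  assumes "finite E" "- l \<in> E" "q \<noteq> 0"
  shows "qprod q E (q powi l) = 0"
  unfolding qprod_def using assms
  by (intro prod_zero bexI[of _ "- l"]) (auto simp flip: power_int_add)

lemma qprod_eq_poly: "qprod q E x = poly (\<Prod>e\<in>E. [:1, - (q powi e):]) x"
  unfolding qprod_def by (simp add: poly_prod)

lemma qprod_nonneg_le_one: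
  assumes "0 \<le> x" "0 < q" "\<And>e. e \<in> E \<Longrightarrow> x * q powi e \<le> 1"
  shows "0 \<le> qprod q E x" "qprod q E x \<le> 1"
  using assms unfolding qprod_def by (auto intro!: prod_nonneg prod_le_1)

lemma abs_qprod_le_prod:
  assumes "finite F" "E \<subseteq> F" "\<And>e. e \<in> F \<Longrightarrow> 1 \<le> x * q powi e"
  shows "\<bar>qprod q E x\<bar> \<le> (\<Prod>e\<in>F. x * q powi e)"
proof -
  have "\<bar>qprod q E x\<bar> \<le> (\<Prod>e\<in>E. x * q powi e)"
    unfolding qprod_def abs_prod using assms by (intro prod_mono) auto
  also have "\<dots> \<le> (\<Prod>e\<in>F. x * q powi e)"
    using assms by (intro prod_mono2) (auto intro: order_trans[OF zero_le_one])
  finally show ?thesis .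
qed

lemma double_sum_Icc_neg_m_4m:
  "2 * (\<Sum>e\<in>{- int m..4 * int m}. e) = 15 * int m ^ 2 + 3 * int m"
proof -
  have "(\<Sum>e\<in>{- int m..4 * int m}. e) = (15 * int m ^ 2 + 3 * int m) div 2"
    using Sum_Icc_int[of "- int m" "4 * int m"] by (simp add: algebra_simps power2_eq_square)
  moreover have "even (15 * int m ^ 2 + 3 * int m)" by auto
  ultimately show ?thesis by simp
qed

lemma qprod_square_at_large_point_le:
  fixes q :: real and m T :: nat
  assumes q: "0 < q" "q < 1" and E: "E \<subseteq> {- int m..4 * int m}" and T: "4 * m + 1 \<le> T"
  shows "(qprod q E (q powi - int T))\<^sup>2 \<le>
    q powr (15 * real m ^ 2 + 3 * real m - 2 * real (5 * m + 1) * real T)"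
proof -
  let ?F = "{- int m..4 * int m}"
  have shift: "q powi - int T * q powi e = q powi (e - int T)" for e
    using q by (simp add: power_int_add[symmetric])
  have "1 \<le> q powi - int T * q powi e" if "e \<in> ?F" for e
    using power_int_decreasing[of "e - int T" 0 q] that q T by (simp add: shift)
  hence "\<bar>qprod q E (q powi - int T)\<bar> \<le> (\<Prod>e\<in>?F. q powi - int T * q powi e)"
    by (intro abs_qprod_le_prod E) auto
  also have "\<dots> = (\<Prod>e\<in>?F. q powi (e - int T))" by (simp only: shift)
  also have "\<dots> = (\<Prod>e\<in>?F. q powr real_of_int (e - int T))"
    using q by (intro prod.cong refl powr_real_of_int'[symmetric]) auto
  also have "\<dots> = q powr (\<Sum>e\<in>?F. real_of_int e - real T)"
    using q by (simp add: powr_sum)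
  finally have "(qprod q E (q powi - int T))\<^sup>2 \<le> (q powr (\<Sum>e\<in>?F. real_of_int e - real T))\<^sup>2"
    by (metis abs_ge_zero power2_abs power_mono)
  also have "\<dots> = q powr (2 * (\<Sum>e\<in>?F. real_of_int e - real T))"
    by (simp add: power2_eq_square powr_add[symmetric])
  also have "2 * (\<Sum>e\<in>?F. real_of_int e - real T) =
      15 * real m ^ 2 + 3 * real m - 2 * real (5 * m + 1) * real T"
    using arg_cong[OF double_sum_Icc_neg_m_4m[of m], of real_of_int]
    by (simp add: sum_subtractf algebra_simps)
  finally show ?thesis .
qed

lemma qprod_square_mass_at_large_point_le:
  fixes q a :: real and m T :: nat
  assumes q: "0 < q" "q < 1" and E: "E \<subseteq> {- int m..4 * int m}" and m: "1 \<le> m" and T: "4 * m + 1 \<le> T"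
    and a: "0 \<le> a" "a \<le> q ^ (2 * T\<^sup>2)"
  shows "(qprod q E (q powi - int T))\<^sup>2 * a \<le> q ^ T"
proof -
  define X where "X = 15 * real m ^ 2 + 3 * real m - 2 * real (5 * m + 1) * real T"
  have "real T \<le> X + 2 * real T ^ 2"
  proof -
    define t where "t = real T - 4 * real m - 1"
    have "X + 2 * real T ^ 2 - real T =
        7 * real m ^ 2 - 3 * real m - 1 + (6 * real m + 1) * t + 2 * t ^ 2"
      by (simp add: X_def t_def power2_eq_square algebra_simps)
    moreover have "real m \<le> real m ^ 2" using power_increasing[of 1 2 "real m"] m by simp
    moreover have "0 \<le> t" using T by (simp add: t_def)
    moreover have "0 \<le> (6 * real m + 1) * t" "1 \<le> real m" using m \<open>0 \<le> t\<close> by simp_all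
    ultimately show ?thesis by (smt (verit) zero_le_power2)
  qed
  have "(qprod q E (q powi - int T))\<^sup>2 * a \<le> q powr X * q ^ (2 * T\<^sup>2)"
    using qprod_square_at_large_point_le[OF q E T] a by (intro mult_mono) (auto simp: X_def)
  also have "\<dots> = q powr (X + 2 * real T ^ 2)"
    using q by (simp add: powr_add powr_realpow[symmetric])
  also have "\<dots> \<le> q powr real T"
    using q \<open>real T \<le> X + 2 * real T ^ 2\<close> by (intro powr_mono') auto
  finally show ?thesis using q by (simp add: powr_realpow)
qed

lemma sum_window_qprod_square_eq_0:
  fixes q :: real and \<mu> :: "real \<Rightarrow> ennreal"
  assumes "q \<noteq> 0"
  shows "(\<Sum>x\<in>q_window q m. ennreal ((qprod q {- int m..4 * int m} x)\<^sup>2) * \<mu> x) = 0"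
  using assms by (intro sum.neutral) (auto simp: q_window_def qprod_eq_0)

lemma sum_window_qprod_square_eq_single:
  fixes q :: real and \<mu> :: "real \<Rightarrow> ennreal"
  assumes q: "0 < q" "q < 1" and j: "- 4 * int m \<le> j" "j \<le> int m"
  defines "E \<equiv> {- int m..4 * int m} - {- j}"
  shows "(\<Sum>x\<in>q_window q m. ennreal ((qprod q E x)\<^sup>2) * \<mu> x) =
    ennreal ((qprod q E (q powi j))\<^sup>2) * \<mu> (q powi j)"
proof -
  have "(\<Sum>x\<in>q_window q m - {q powi j}. ennreal ((qprod q E x)\<^sup>2) * \<mu> x) = 0"
    using q power_int_eq_iff_less_one[OF q]
    by (intro sum.neutral) (auto simp: q_window_def E_def qprod_eq_0)
  moreover have "q powi j \<in> q_window q m" using j by (auto simp: q_window_def)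
  ultimately show ?thesis by (simp add: sum.remove q_window_def)
qed

lemma qprod_square_le_lattice_decomposition:
  fixes q :: real and m :: nat
  assumes q: "0 < q" "q < 1" and E: "E \<subseteq> {- int m..4 * int m}" and x: "x \<in> q_lattice q"
  shows "ennreal ((qprod q E x)\<^sup>2) \<le>
      ennreal ((qprod q E x)\<^sup>2) * indicator (q_window q m) x
      + indicator {x. 0 < x \<and> x \<le> q powi (int m + 1)} x
      + (\<Sum>t. ennreal ((qprod q E x)\<^sup>2) * indicator {q powi - int (t + 4 * m + 1)} x)"
    (is "?f \<le> ?window + ?small + ?large")
proof -
  obtain l where l: "x = q powi l" using x by (auto simp: q_lattice_def)
  consider "int m + 1 \<le> l" | "- 4 * int m \<le> l \<and> l \<le> int m" | "l < - 4 * int m" by linarith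
  thus ?thesis
  proof cases
    case 1
    have "x \<le> q powi (int m + 1)" using l q 1 by (simp add: power_int_decreasing)
    hence "?small = 1" using l q by simp
    moreover have "(qprod q E x)\<^sup>2 \<le> 1"
    proof -
      have "x * q powi e \<le> 1" if "e \<in> E" for e
        using that E 1 q power_int_decreasing[of 0 "l + e" q] by (auto simp: l power_int_add)
      hence "0 \<le> qprod q E x" "qprod q E x \<le> 1" using l q by (auto intro: qprod_nonneg_le_one)
      thus ?thesis by (simp add: power_le_one)
    qed
    ultimately show ?thesis by (simp add: add_increasing2 add_increasing)
  next
    case 2
    hence "?window = ?f" using l by (auto simp: q_window_def)
    thus ?thesis by (simp add: add.assoc add_increasing2)
  next
    case 3
    define t where "t = nat (- l - 4 * int m - 1)"
    have "x = q powi - int (t + 4 * m + 1)" using 3 by (simp add: l t_def)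
    hence "?f = (\<Sum>s\<in>{t}. ennreal ((qprod q E x)\<^sup>2) * indicator {q powi - int (s + 4 * m + 1)} x)" by simp
    also have "\<dots> \<le> ?large" by (intro sum_le_suminf) auto
    finally show ?thesis by (simp add: add_increasing)
  qed
qed

lemma countable_q_lattice: "countable (q_lattice q)"
  unfolding q_lattice_def by simp

lemma q_lattice_in_borel: "q_lattice q \<in> sets borel"
  by (rule sets.countable[OF _ countable_q_lattice]) simp

lemma suminf_ennreal_power_shift:
  fixes q :: real
  assumes "0 < q" "q < 1"
  shows "(\<Sum>t. ennreal (q ^ (t + k))) = ennreal (q ^ k / (1 - q))"
proof -
  have "(\<lambda>t. q ^ (t + k)) sums (q ^ k / (1 - q))"
    using sums_mult2[OF geometric_sums[of q], of "q ^ k"] assms by (simp add: power_add field_simps)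
  thus ?thesis using assms by (subst suminf_ennreal2) (auto simp: sums_iff)
qed

lemma finite_measure_of_integrable_one:
  assumes "integrable M (\<lambda>x. 1 :: real)"
  shows "finite_measure M"
proof
  show "emeasure M (space M) \<noteq> \<infinity>"
    using assms by (simp add: integrable_iff_bounded)
qed

lemma moment_even_nonneg: "0 \<le> moment M (2 * n)"
  unfolding moment_def by (simp add: power_mult)

lemma integral_poly_eq_of_moments_eq:
  assumes "\<And>n. integrable M (\<lambda>x. x ^ n)" "\<And>n. integrable N (\<lambda>x. x ^ n)"
    and "\<And>n. moment N n = moment M n"
  shows "(\<integral>x. poly p x \<partial>N) = (\<integral>x. poly p x \<partial>M)"
proof -
  have "(\<integral>x. poly p x \<partial>K) = (\<Sum>i\<le>degree p. coeff p i * moment K i)"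
    if "\<And>n. integrable K (\<lambda>x. x ^ n)" for K
    unfolding poly_altdef moment_def using that by (simp add: Bochner_Integration.integral_sum)
  thus ?thesis using assms by simp
qed

lemma nn_integral_poly_square_eq_of_moments_eq:
  assumes "\<And>n. integrable M (\<lambda>x. x ^ n)" "\<And>n. integrable N (\<lambda>x. x ^ n)"
    and "\<And>n. moment N n = moment M n"
  shows "(\<integral>\<^sup>+x. ennreal ((poly p x)\<^sup>2) \<partial>N) = (\<integral>\<^sup>+x. ennreal ((poly p x)\<^sup>2) \<partial>M)"
proof -
  have "(\<integral>\<^sup>+x. ennreal ((poly p x)\<^sup>2) \<partial>K) = ennreal (\<integral>x. poly (p ^ 2) x \<partial>K)"
    if "\<And>n. integrable K (\<lambda>x. x ^ n)" for K
  proof -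
    have "integrable K (\<lambda>x. poly (p ^ 2) x)"
      unfolding poly_altdef using that by (intro Bochner_Integration.integrable_sum integrable_mult_right)
    thus ?thesis by (subst nn_integral_eq_integral) (simp_all flip: poly_power, simp add: poly_power)
  qed
  with assms integral_poly_eq_of_moments_eq[OF assms, of "p ^ 2"] show ?thesis by metis
qed

lemma point_mass_le_even_moment:
  fixes M :: "real measure"
  assumes "finite_measure M" "sets M = sets borel" "integrable M (\<lambda>x. x ^ (2 * k))"
  shows "c ^ (2 * k) * measure M {c} \<le> moment M (2 * k)"
proof -
  have nonneg: "0 \<le> x ^ (2 * k)" for x :: real by (simp add: power_mult)
  have "ennreal (c ^ (2 * k) * measure M {c}) = (\<integral>\<^sup>+x. ennreal (x ^ (2 * k)) * indicator {c} x \<partial>M)"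
    using assms nonneg by (simp add: finite_measure.emeasure_eq_measure ennreal_mult)
  also have "\<dots> \<le> (\<integral>\<^sup>+x. ennreal (x ^ (2 * k)) \<partial>M)"
    by (intro nn_integral_mono) (auto simp: indicator_def)
  also have "\<dots> = ennreal (moment M (2 * k))"
    unfolding moment_def using assms nonneg by (intro nn_integral_eq_integral) auto
  finally show ?thesis using moment_even_nonneg[of M k] by (simp add: ennreal_le_iff)
qed

lemma measure_eqI_countable_AE_borel:
  fixes M N :: "'a::t1_space measure"
  assumes sets: "sets M = sets borel" "sets N = sets borel"
    and AE: "AE x in M. x \<in> S" "AE x in N. x \<in> S" and S: "countable S"
    and eq: "\<And>x. x \<in> S \<Longrightarrow> emeasure M {x} = emeasure N {x}"
  shows "M = N"
proof (rule measure_eqI)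
  show "sets M = sets N" using sets by simp
  fix X assume X: "X \<in> sets M"
  have S_borel: "S \<in> sets borel" by (rule sets.countable[OF _ S]) simp
  have countable: "countable (X \<inter> S)" using S by (rule countable_subset[rotated]) auto
  have "emeasure M X = emeasure M (X \<inter> S)"
    by (rule emeasure_eq_AE) (use AE(1) X S_borel sets in auto)
  also have "\<dots> = (\<integral>\<^sup>+x. emeasure M {x} \<partial>count_space (X \<inter> S))"
    by (rule emeasure_countable_singleton[OF _ countable]) (use sets in auto)
  also have "\<dots> = (\<integral>\<^sup>+x. emeasure N {x} \<partial>count_space (X \<inter> S))"
    by (rule nn_integral_cong) (auto simp: eq)
  also have "\<dots> = emeasure N (X \<inter> S)"
    by (rule emeasure_countable_singleton[symmetric, OF _ countable]) (use sets in auto)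
  also have "\<dots> = emeasure N X"
    by (rule emeasure_eq_AE) (use AE(2) X S_borel sets in auto)
  finally show "emeasure M X = emeasure N X" .
qed

lemma eventually_moment_growth_le:
  fixes q :: real and s :: "nat \<Rightarrow> real"
  assumes q: "0 < q" and s: "\<And>n. 0 \<le> s (2 * n)"
    and lim: "(\<lambda>n. q powr (real n / 4) * s (2 * n) powr (1 / real (2 * n))) \<longlonglongrightarrow> 0"
  shows "eventually (\<lambda>t. s (4 * t) * q ^ (2 * t\<^sup>2) \<le> 1) sequentially"
proof -
  have "eventually (\<lambda>n. q powr (real n / 4) * s (2 * n) powr (1 / real (2 * n)) < 1) sequentially"
    using lim by (rule order_tendstoD) simp
  then obtain n0 where n0: "\<And>n. n0 \<le> n \<Longrightarrow> q powr (real n / 4) * s (2 * n) powr (1 / real (2 * n)) < 1"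
    by (auto simp: eventually_sequentially)
  show ?thesis unfolding eventually_sequentially
  proof (intro exI[of _ "max 1 n0"] allI impI)
    fix t assume t: "max 1 n0 \<le> t"
    define a where "a = s (4 * t)"
    have a: "0 \<le> a" using s[of "2 * t"] by (simp add: a_def mult.assoc)
    have "q powr (real t / 2) * a powr (1 / (4 * real t)) < 1"
      using n0[of "2 * t"] t by (simp add: a_def mult.assoc)
    hence "a powr (1 / (4 * real t)) \<le> q powr (- (real t / 2))"
      using q by (simp add: powr_minus field_simps)
    hence "(a powr (1 / (4 * real t))) powr (4 * real t) \<le> (q powr (- (real t / 2))) powr (4 * real t)"
      by (intro powr_mono2) auto
    hence "a \<le> q powr (- (2 * real t ^ 2))"
      using a t by (simp add: powr_powr power2_eq_square)
    hence "a * q ^ (2 * t\<^sup>2) \<le> q powr (- (2 * real t ^ 2)) * q powr (2 * real t ^ 2)"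
      using q by (simp add: powr_realpow[symmetric] mult_right_mono)
    also have "\<dots> = 1" using q by (simp add: powr_add[symmetric])
    finally show "s (4 * t) * q ^ (2 * t\<^sup>2) \<le> 1" by (simp add: a_def)
  qed
qed

locale q_lattice_measure =
  fixes q :: real and M :: "real measure"
  assumes q_pos: "0 < q" and q_less_1: "q < 1"
    and sets_eq_borel [measurable_cong]: "sets M = sets borel"
    and integrable_power: "\<And>n. integrable M (\<lambda>x. x ^ n)"
    and AE_in_q_lattice: "AE x in M. x \<in> q_lattice q"
    and eventually_moment_le: "eventually (\<lambda>t. moment M (4 * t) * q ^ (2 * t\<^sup>2) \<le> 1) sequentially"
begin

sublocale finite_measure M
  using integrable_power[of 0] by (intro finite_measure_of_integrable_one) simp

lemma eventually_point_mass_le: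
  "eventually (\<lambda>T. measure M {q powi - int T} \<le> q ^ (2 * T\<^sup>2)) sequentially"
  using eventually_moment_le
proof eventually_elim
  case (elim T)
  define a where "a = measure M {q powi - int T}"
  have power: "(q powi - int T) ^ (2 * (2 * T)) * q ^ (4 * T\<^sup>2) = 1"
  proof -
    have "(q powi - int T) ^ (2 * (2 * T)) = inverse (q ^ (T * (2 * (2 * T))))"
      by (simp add: power_int_minus power_inverse power_mult)
    moreover have "q ^ (T * (2 * (2 * T))) = q ^ (4 * T\<^sup>2)"
      by (rule arg_cong[where f = "power q"]) (simp add: power2_eq_square)
    ultimately show ?thesis using q_pos by (simp only:) simp
  qed
  have "a = ((q powi - int T) ^ (2 * (2 * T)) * a) * q ^ (4 * T\<^sup>2)"
    using power by (simp only: mult_ac mult_1_right)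
  also have "\<dots> \<le> moment M (2 * (2 * T)) * q ^ (4 * T\<^sup>2)"
    unfolding a_def using q_pos
    by (intro mult_right_mono point_mass_le_even_moment) (auto simp: sets_eq_borel integrable_power finite_measure_axioms)
  also have "\<dots> = (moment M (4 * T) * q ^ (2 * T\<^sup>2)) * q ^ (2 * T\<^sup>2)"
    by (simp add: mult.assoc flip: power_add)
  also have "\<dots> \<le> q ^ (2 * T\<^sup>2)"
    using elim q_pos moment_even_nonneg[of M "2 * T"] by (intro mult_left_le_one_le) auto
  finally show ?case by (simp add: a_def)
qed

text \<open>The two terms bound the contributions of the lattice points \<open>q^l\<close> with \<open>l > m\<close> and
  (through the moment bound) with \<open>l < -4m\<close> to the integral of \<open>(qprod q E)\<^sup>2\<close>, \<open>E \<subseteq> {-m..4m}\<close>.\<close>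
definition remainder :: "nat \<Rightarrow> real" where
  "remainder m = measure M {x. 0 < x \<and> x \<le> q powi (int m + 1)} + q ^ (4 * m + 1) / (1 - q)"

lemma remainder_nonneg: "0 \<le> remainder m"
  unfolding remainder_def using q_pos q_less_1 by simp

lemma remainder_tendsto_0: "remainder \<longlonglongrightarrow> 0"
proof -
  define S where "S m = {x. 0 < x \<and> x \<le> q powi (int m + 1)}" for m :: nat
  have "decseq S"
    using q_pos q_less_1 by (intro decseq_SucI) (auto simp: S_def intro: order_trans[OF _ power_int_decreasing])
  moreover have "range S \<subseteq> sets M" by (auto simp: S_def)
  ultimately have "(\<lambda>m. measure M (S m)) \<longlonglongrightarrow> measure M (\<Inter>m. S m)"
    by (intro finite_Lim_measure_decseq)
  moreover have "(\<Inter>m. S m) = {}"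
  proof (safe)
    fix x assume x: "x \<in> (\<Inter>m. S m)"
    hence "0 < x" by (auto simp: S_def)
    moreover have "(\<lambda>n. q ^ n) \<longlonglongrightarrow> 0" using q_pos q_less_1 by (intro LIMSEQ_power_zero) auto
    ultimately have "eventually (\<lambda>n. q ^ n < x) sequentially" by (simp add: order_tendstoD(2))
    then obtain m where "q ^ m < x" by (auto simp: eventually_sequentially)
    moreover have "x \<le> q powi (int m + 1)" using x unfolding S_def by blast
    hence "x \<le> q ^ (m + 1)" by (metis of_nat_Suc power_int_of_nat Suc_eq_plus1 add.commute)
    moreover have "q ^ (m + 1) \<le> q ^ m" using q_pos q_less_1 by (intro power_decreasing) auto
    ultimately show "x \<in> {}" by simp
  qed
  ultimately have "(\<lambda>m. measure M (S m)) \<longlonglongrightarrow> 0" by simp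
  moreover have "(\<lambda>m. q ^ (4 * m + 1) / (1 - q)) \<longlonglongrightarrow> 0"
    using q_pos q_less_1 LIMSEQ_subseq_LIMSEQ[OF LIMSEQ_power_zero[of q], of "\<lambda>m. 4 * m + 1"]
    by (intro tendsto_divide_zero) (auto simp: strict_mono_def o_def)
  ultimately have "(\<lambda>m. measure M (S m) + q ^ (4 * m + 1) / (1 - q)) \<longlonglongrightarrow> 0 + 0"
    by (rule tendsto_add)
  thus ?thesis by (simp add: remainder_def[abs_def] S_def)
qed

lemma suminf_large_points_le:
  assumes m: "1 \<le> m" and E: "E \<subseteq> {- int m..4 * int m}"
    and mass: "\<And>T. 4 * m + 1 \<le> T \<Longrightarrow> measure M {q powi - int T} \<le> q ^ (2 * T\<^sup>2)"
  shows "(\<Sum>t. \<integral>\<^sup>+x. ennreal ((qprod q E x)\<^sup>2) * indicator {q powi - int (t + 4 * m + 1)} x \<partial>M)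
    \<le> ennreal (q ^ (4 * m + 1) / (1 - q))"
proof -
  have "(\<integral>\<^sup>+x. ennreal ((qprod q E x)\<^sup>2) * indicator {q powi - int (t + 4 * m + 1)} x \<partial>M)
      \<le> ennreal (q ^ (t + (4 * m + 1)))" for t
  proof -
    let ?x = "q powi - int (t + 4 * m + 1)"
    have "(\<integral>\<^sup>+x. ennreal ((qprod q E x)\<^sup>2) * indicator {?x} x \<partial>M) =
        ennreal ((qprod q E ?x)\<^sup>2 * measure M {?x})"
      by (simp add: emeasure_eq_measure ennreal_mult)
    also have "\<dots> \<le> ennreal (q ^ (t + 4 * m + 1))"
      by (intro ennreal_leI qprod_square_mass_at_large_point_le[OF q_pos q_less_1 E m]
          mass[of "t + 4 * m + 1"]) auto
    finally show ?thesis by (simp only: add.assoc)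
  qed
  hence "(\<Sum>t. \<integral>\<^sup>+x. ennreal ((qprod q E x)\<^sup>2) * indicator {q powi - int (t + 4 * m + 1)} x \<partial>M)
      \<le> (\<Sum>t. ennreal (q ^ (t + (4 * m + 1))))"
    by (intro suminf_le) auto
  also have "\<dots> = ennreal (q ^ (4 * m + 1) / (1 - q))"
    using q_pos q_less_1 by (rule suminf_ennreal_power_shift)
  finally show ?thesis .
qed

lemma nn_integral_qprod_square_le:
  assumes m: "1 \<le> m" and E: "E \<subseteq> {- int m..4 * int m}"
    and mass: "\<And>T. 4 * m + 1 \<le> T \<Longrightarrow> measure M {q powi - int T} \<le> q ^ (2 * T\<^sup>2)"
  shows "(\<integral>\<^sup>+x. ennreal ((qprod q E x)\<^sup>2) \<partial>M) \<le>
    (\<Sum>x\<in>q_window q m. ennreal ((qprod q E x)\<^sup>2) * emeasure M {x}) + ennreal (remainder m)"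
proof -
  define f where "f x = ennreal ((qprod q E x)\<^sup>2)" for x
  define S where "S = {x. 0 < x \<and> x \<le> q powi (int m + 1)}"
  define pt where "pt t = q powi - int (t + 4 * m + 1)" for t
  have [measurable]: "f \<in> borel_measurable borel" unfolding f_def qprod_def by measurable
  have [measurable]: "S \<in> sets borel" unfolding S_def by measurable
  have [measurable]: "q_window q m \<in> sets borel"
    unfolding q_window_def by (rule sets.countable) auto
  have "(\<integral>\<^sup>+x. f x \<partial>M) \<le>
      (\<integral>\<^sup>+x. f x * indicator (q_window q m) x + indicator S x + (\<Sum>t. f x * indicator {pt t} x) \<partial>M)"
    using AE_in_q_lattice
  proof (intro nn_integral_mono_AE, eventually_elim)
    case (elim x)
    show ?case
      unfolding f_def S_def pt_def
      by (rule qprod_square_le_lattice_decomposition[OF q_pos q_less_1 E \<open>x \<in> q_lattice q\<close>])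
  qed
  also have "\<dots> = (\<integral>\<^sup>+x. f x * indicator (q_window q m) x + indicator S x \<partial>M)
      + (\<integral>\<^sup>+x. (\<Sum>t. f x * indicator {pt t} x) \<partial>M)"
    by (rule nn_integral_add) measurable
  also have "(\<integral>\<^sup>+x. f x * indicator (q_window q m) x + indicator S x \<partial>M) =
      (\<Sum>x\<in>q_window q m. f x * emeasure M {x}) + emeasure M S"
    by (subst nn_integral_add, measurable) (auto simp: q_window_def nn_integral_indicator_finite)
  also have "(\<integral>\<^sup>+x. (\<Sum>t. f x * indicator {pt t} x) \<partial>M) = (\<Sum>t. \<integral>\<^sup>+x. f x * indicator {pt t} x \<partial>M)"
    by (rule nn_integral_suminf) measurable
  also have "(\<Sum>x\<in>q_window q m. f x * emeasure M {x}) + emeasure M S + \<dots> \<le>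
      (\<Sum>x\<in>q_window q m. f x * emeasure M {x}) + emeasure M S + ennreal (q ^ (4 * m + 1) / (1 - q))"
    unfolding f_def pt_def by (intro add_left_mono suminf_large_points_le m E mass)
  also have "\<dots> = (\<Sum>x\<in>q_window q m. f x * emeasure M {x}) + ennreal (remainder m)"
    unfolding remainder_def S_def using q_pos q_less_1
    by (simp add: emeasure_eq_measure ennreal_plus add.assoc)
  finally show ?thesis by (simp only: f_def)
qed

lemma eventually_nn_integral_qprod_square_le:
  "eventually (\<lambda>m. \<forall>E \<subseteq> {- int m..4 * int m}. (\<integral>\<^sup>+x. ennreal ((qprod q E x)\<^sup>2) \<partial>M) \<le>
    (\<Sum>x\<in>q_window q m. ennreal ((qprod q E x)\<^sup>2) * emeasure M {x}) + ennreal (remainder m)) sequentially"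
proof -
  obtain T0 where T0: "\<And>T. T0 \<le> T \<Longrightarrow> measure M {q powi - int T} \<le> q ^ (2 * T\<^sup>2)"
    using eventually_point_mass_le by (auto simp: eventually_sequentially)
  show ?thesis unfolding eventually_sequentially
  proof (intro exI[of _ "max 1 T0"] allI impI)
    fix m E assume "max 1 T0 \<le> m" "E \<subseteq> {- int m..4 * int m}"
    thus "(\<integral>\<^sup>+x. ennreal ((qprod q E x)\<^sup>2) \<partial>M) \<le>
      (\<Sum>x\<in>q_window q m. ennreal ((qprod q E x)\<^sup>2) * emeasure M {x}) + ennreal (remainder m)"
      by (intro nn_integral_qprod_square_le) (auto intro: T0)
  qed
qed

lemma nn_integral_qprod_square_eq_of_moments_eq:
  assumes "\<And>n. integrable N (\<lambda>x. x ^ n)" "\<And>n. moment N n = moment M n"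
  shows "(\<integral>\<^sup>+x. ennreal ((qprod q E x)\<^sup>2) \<partial>N) = (\<integral>\<^sup>+x. ennreal ((qprod q E x)\<^sup>2) \<partial>M)"
  unfolding qprod_eq_poly by (rule nn_integral_poly_square_eq_of_moments_eq[OF integrable_power assms])

lemma AE_liminf_qprod_square_eq_0_of_moments_eq:
  assumes N: "sets N = sets borel" "\<And>n. integrable N (\<lambda>x. x ^ n)" "\<And>n. moment N n = moment M n"
  shows "AE x in N. liminf (\<lambda>m. ennreal ((qprod q {- int m..4 * int m} x)\<^sup>2)) = 0"
proof -
  define G where "G m = (\<lambda>x. ennreal ((qprod q {- int m..4 * int m} x)\<^sup>2))" for m
  have G_measurable[measurable]: "G m \<in> borel_measurable N" for m
    unfolding G_def qprod_def by (simp add: measurable_cong_sets[OF N(1) refl])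
  have "eventually (\<lambda>m. integral\<^sup>N N (G m) \<le> ennreal (remainder m)) sequentially"
    using eventually_nn_integral_qprod_square_le
  proof eventually_elim
    case (elim m)
    have "integral\<^sup>N N (G m) = integral\<^sup>N M (G m)"
      unfolding G_def by (rule nn_integral_qprod_square_eq_of_moments_eq[OF N(2,3)])
    also have "\<dots> \<le> (\<Sum>x\<in>q_window q m.
        ennreal ((qprod q {- int m..4 * int m} x)\<^sup>2) * emeasure M {x}) + ennreal (remainder m)"
      unfolding G_def using elim by blast
    also have "\<dots> = ennreal (remainder m)"
      by (subst sum_window_qprod_square_eq_0) (use q_pos in auto)
    finally show ?case .
  qed
  hence "liminf (\<lambda>m. integral\<^sup>N N (G m)) \<le> liminf (\<lambda>m. ennreal (remainder m))"
    by (rule Liminf_mono)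
  also have "\<dots> = 0"
    using remainder_tendsto_0 by (intro lim_imp_Liminf) (auto simp flip: ennreal_0)
  finally have "(\<integral>\<^sup>+x. liminf (\<lambda>m. G m x) \<partial>N) = 0"
    using nn_integral_liminf[of G N] by (simp add: le_zero_eq)
  thus ?thesis by (subst (asm) nn_integral_0_iff_AE) (measurable, simp add: G_def)
qed

lemma AE_in_q_lattice_of_moments_eq:
  assumes N: "sets N = sets borel" "\<And>n. integrable N (\<lambda>x. x ^ n)" "\<And>n. moment N n = moment M n"
  shows "AE x in N. x \<in> q_lattice q"
  using AE_liminf_qprod_square_eq_0_of_moments_eq[OF N]
proof (rule eventually_mono)
  fix x assume liminf_0: "liminf (\<lambda>m. ennreal ((qprod q {- int m..4 * int m} x)\<^sup>2)) = 0"
  show "x \<in> q_lattice q"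
  proof (rule ccontr)
    assume x: "x \<notin> q_lattice q"
    obtain c where c: "0 < c"
      "\<And>E. finite E \<Longrightarrow> (\<And>e. e \<in> E \<Longrightarrow> x * q powi e \<noteq> 1) \<Longrightarrow>
        c \<le> \<bar>qprod q E x\<bar>"
      using qprod_bounded_below[OF q_pos q_less_1] by blast
    have "x * q powi e \<noteq> 1" for e
    proof
      assume "x * q powi e = 1"
      hence "x = q powi - e" using q_pos by (simp add: power_int_minus field_simps)
      thus False using x by (auto simp: q_lattice_def)
    qed
    hence "c \<le> \<bar>qprod q {- int m..4 * int m} x\<bar>" for m using c by blast
    hence "ennreal (c\<^sup>2) \<le> ennreal ((qprod q {- int m..4 * int m} x)\<^sup>2)" for m
      using c by (intro ennreal_leI) (metis abs_ge_zero power2_abs power_mono less_imp_le)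
    hence "ennreal (c\<^sup>2) \<le> liminf (\<lambda>m. ennreal ((qprod q {- int m..4 * int m} x)\<^sup>2))"
      by (intro Liminf_bounded) auto
    thus False using c liminf_0 by simp
  qed
qed

lemma eventually_point_mass_le_add_remainder:
  assumes N: "sets N = sets borel" "\<And>n. integrable N (\<lambda>x. x ^ n)" "\<And>n. moment N n = moment M n"
    and c: "0 < c" "\<And>m. c \<le> \<bar>qprod q ({- int m..4 * int m} - {- j}) (q powi j)\<bar>"
  shows "eventually (\<lambda>m. measure N {q powi j} \<le> measure M {q powi j} + remainder m / c\<^sup>2) sequentially"
  using eventually_nn_integral_qprod_square_le eventually_ge_at_top[of "nat \<bar>j\<bar>"]
proof eventually_elim
  case (elim m)
  interpret N: finite_measure N
    using N(2)[of 0] by (intro finite_measure_of_integrable_one) simp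
  define x where "x = q powi j"
  define E where "E = {- int m..4 * int m} - {- j}"
  define h where "h = (qprod q E x)\<^sup>2"
  have h: "c\<^sup>2 \<le> h"
    using c unfolding h_def E_def x_def by (metis abs_ge_zero power2_abs power_mono less_imp_le)
  have h_pos: "0 < h" using h c by (meson less_le_trans zero_less_power)
  have "ennreal h * emeasure N {x} = (\<integral>\<^sup>+y. ennreal ((qprod q E y)\<^sup>2) * indicator {x} y \<partial>N)"
    using N(1) by (simp add: h_def)
  also have "\<dots> \<le> (\<integral>\<^sup>+y. ennreal ((qprod q E y)\<^sup>2) \<partial>N)"
    by (intro nn_integral_mono) (auto simp: indicator_def)
  also have "\<dots> = (\<integral>\<^sup>+y. ennreal ((qprod q E y)\<^sup>2) \<partial>M)"
    by (rule nn_integral_qprod_square_eq_of_moments_eq[OF N(2,3)])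
  also have "\<dots> \<le> ennreal h * emeasure M {x} + ennreal (remainder m)"
    using elim(1)[rule_format, of E] elim(2) q_pos q_less_1
      sum_window_qprod_square_eq_single[where \<mu> = "\<lambda>y. emeasure M {y}" and j = j and m = m]
    by (auto simp: E_def h_def x_def)
  finally have "ennreal (h * measure N {x}) \<le> ennreal (h * measure M {x} + remainder m)"
    using remainder_nonneg[of m] h_pos
    by (simp add: emeasure_eq_measure N.emeasure_eq_measure ennreal_mult ennreal_plus)
  hence "h * measure N {x} \<le> h * measure M {x} + remainder m"
    using remainder_nonneg[of m] h_pos by (subst (asm) ennreal_le_iff) auto
  hence "measure N {x} \<le> measure M {x} + remainder m / h"
    using h_pos by (simp add: field_simps)
  also have "remainder m / h \<le> remainder m / c\<^sup>2"
    using remainder_nonneg[of m] h h_pos c by (intro divide_left_mono) auto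
  finally show ?case by (simp add: x_def)
qed

lemma emeasure_point_le_of_moments_eq:
  assumes N: "sets N = sets borel" "\<And>n. integrable N (\<lambda>x. x ^ n)" "\<And>n. moment N n = moment M n"
  shows "emeasure N {q powi j} \<le> emeasure M {q powi j}"
proof -
  interpret N: finite_measure N
    using N(2)[of 0] by (intro finite_measure_of_integrable_one) simp
  obtain c where c: "0 < c"
    "\<And>E. finite E \<Longrightarrow> (\<And>e. e \<in> E \<Longrightarrow> q powi j * q powi e \<noteq> 1) \<Longrightarrow>
      c \<le> \<bar>qprod q E (q powi j)\<bar>"
    using qprod_bounded_below[OF q_pos q_less_1] by blast
  have "q powi j * q powi e \<noteq> 1" if "e \<noteq> - j" for e
    using that power_int_eq_iff_less_one[OF q_pos q_less_1, of "j + e" 0] q_pos by (auto simp: power_int_add)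
  hence "c \<le> \<bar>qprod q ({- int m..4 * int m} - {- j}) (q powi j)\<bar>" for m by (intro c(2)) auto
  hence "eventually (\<lambda>m. measure N {q powi j} \<le> measure M {q powi j} + remainder m / c\<^sup>2) sequentially"
    using c(1) by (intro eventually_point_mass_le_add_remainder N)
  moreover have "(\<lambda>m. measure M {q powi j} + remainder m / c\<^sup>2) \<longlonglongrightarrow> measure M {q powi j} + 0 / c\<^sup>2"
    by (intro tendsto_intros remainder_tendsto_0) (use c in simp)
  ultimately have "measure N {q powi j} \<le> measure M {q powi j}"
    by (intro tendsto_le[OF trivial_limit_sequentially _ tendsto_const]) auto
  thus ?thesis by (simp add: emeasure_eq_measure N.emeasure_eq_measure)
qed

lemma q_lattice_measure_of_moments_eq:
  assumes N: "sets N = sets borel" "\<And>n. integrable N (\<lambda>x. x ^ n)" "\<And>n. moment N n = moment M n"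
  shows "q_lattice_measure q N"
  using q_pos q_less_1 N AE_in_q_lattice_of_moments_eq[OF N] eventually_moment_le
  by unfold_locales simp_all

lemma determinate: "determinate M"
  unfolding determinate_def has_all_moments_def
proof (intro conjI allI impI)
  fix N assume "(sets N = sets borel \<and> (\<forall>n. integrable N (\<lambda>x. x ^ n))) \<and> (\<forall>n. moment N n = moment M n)"
  hence N: "sets N = sets borel" "\<And>n. integrable N (\<lambda>x. x ^ n)" "\<And>n. moment N n = moment M n"
    by auto
  interpret N: q_lattice_measure q N by (rule q_lattice_measure_of_moments_eq[OF N])
  show "N = M"
    using N(1) sets_eq_borel N.AE_in_q_lattice AE_in_q_lattice countable_q_lattice
  proof (rule measure_eqI_countable_AE_borel)
    fix x assume "x \<in> q_lattice q"
    then obtain j where "x = q powi j" by (auto simp: q_lattice_def)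
    thus "emeasure N {x} = emeasure M {x}"
      using emeasure_point_le_of_moments_eq[OF N] N.emeasure_point_le_of_moments_eq[of M]
        sets_eq_borel integrable_power N(3) by (auto intro: antisym)
  qed
qed (use sets_eq_borel integrable_power in auto)

end

theorem theorem2:
  fixes q v :: real and \<omega> :: "real \<Rightarrow> real"
  assumes "0 < q" "q < 1" "v > -1"
    and "\<And>x. \<omega> (- x) = \<omega> x"
    and "\<And>n::int. \<omega> (q powi n) \<noteq> 0"
    and "\<And>n. integrable (q_measure q v \<omega>) (\<lambda>x. x ^ n)"
    and "(\<lambda>n. q powr (real n / 4) * (moment (q_measure q v \<omega>) (2 * n)) powr (1 / real (2 * n)))
           \<longlonglongrightarrow> 0"
  shows "determinate (q_measure q v \<omega>)"
proof -
  txt \<open>Only the support of the measure on the \<open>q\<close>-lattice and the growth of its moments matter.\<close>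
  interpret q_lattice_measure q "q_measure q v \<omega>"
  proof
    show "sets (q_measure q v \<omega>) = sets borel" by (simp add: q_measure_def)
    show "AE x in q_measure q v \<omega>. x \<in> q_lattice q"
      unfolding q_measure_def using q_lattice_in_borel by (subst AE_distr_iff) (auto simp: q_lattice_def)
    show "eventually (\<lambda>t. moment (q_measure q v \<omega>) (4 * t) * q ^ (2 * t\<^sup>2) \<le> 1) sequentially"
      using assms(1,7) by (intro eventually_moment_growth_le moment_even_nonneg) simp_all
  qed (use assms(1,2,6) in simp_all)
  show ?thesis by (rule determinate)
qed

end
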